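(* Under the setting below, suppose that for some $\tau_c\in(0,\bar\tau)$ the equation $\Delta(\lambda,\tau_c):=\lambda+A(\tau_c)-B(\tau_c)e^{-\lambda\tau_c}=0$ has a pair of purely imaginary roots $\pm i\omega(\tau_c)$ with $\omega(\tau_c)>0$. Then $\pm i\omega(\tau_c)$ are simple roots, so there is a $C^1$ branch of roots $\lambda(\tau)$ near $\tau_c$ with $\lambda(\tau_c)=i\omega(\tau_c)$, and $$\mathrm{sign}\left\{\frac{d\,\mathrm{Re}\,\lambda}{d\tau}\Big|_{\tau=\tau_c}\right\}=\mathrm{sign}\Big\{-B^3-B^2B'\tau_c+B\,(A^2+A'+AA'\tau_c)-B'A\Big\},$$ where $A=A(\tau_c)$, $B=B(\tau_c)$, $A'=A'(\tau_c)$, $B'=B'(\tau_c)$.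
   Context: Let $\delta>0$ and $\beta:[0,+\infty)\to(0,+\infty)$ twice continuously differentiable, strictly decreasing, with $\beta'(s)<0$ for $s>0$, $\lim_{S\to+\infty}\beta(S)=0$, and $\delta<\beta(0)$. Let $\bar\tau:=\frac1\delta\ln\!\big(\frac{2\beta(0)}{\delta+\beta(0)}\big)$, $\beta^{-1}$ the inverse of $\beta$ on $(0,\beta(0)]$, and for $\tau\in[0,\bar\tau)$: $S^*(\tau)=\beta^{-1}\!\big(\frac{\delta}{2e^{-\delta\tau}-1}\big)$, $N^*(\tau)=(2e^{-\delta\tau}-1)e^{\delta\tau}S^*(\tau)$, $A(\tau)=\delta+\beta(S^*(\tau))$, $B(\tau)=[2\beta(S^*(\tau))+N^*(\tau)\beta'(S^*(\tau))]e^{-\delta\tau}$; these are continuously differentiable in $\tau$, and $A'$, $B'$ denote their derivatives. *)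

theory Defs
  imports "HOL-Analysis.Analysis"
begin

definition taubar :: "(real \<Rightarrow> real) \<Rightarrow> real \<Rightarrow> real" where
  "taubar \<beta> \<delta> = (1/\<delta>) * ln (2 * \<beta> 0 / (\<delta> + \<beta> 0))"

definition beta_inv :: "(real \<Rightarrow> real) \<Rightarrow> real \<Rightarrow> real" where
  "beta_inv \<beta> y = the_inv_into {0..} \<beta> y"

definition Sstar :: "(real \<Rightarrow> real) \<Rightarrow> real \<Rightarrow> real \<Rightarrow> real" where
  "Sstar \<beta> \<delta> \<tau> = beta_inv \<beta> (\<delta> / (2 * exp (-\<delta>*\<tau>) - 1))"

definition Nstar :: "(real \<Rightarrow> real) \<Rightarrow> real \<Rightarrow> real \<Rightarrow> real" where
  "Nstar \<beta> \<delta> \<tau> = (2 * exp (-\<delta>*\<tau>) - 1) * exp (\<delta>*\<tau>) * Sstar \<beta> \<delta> \<tau>"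

definition Acoef :: "(real \<Rightarrow> real) \<Rightarrow> real \<Rightarrow> real \<Rightarrow> real" where
  "Acoef \<beta> \<delta> \<tau> = \<delta> + \<beta> (Sstar \<beta> \<delta> \<tau>)"

definition Bcoef :: "(real \<Rightarrow> real) \<Rightarrow> real \<Rightarrow> real \<Rightarrow> real" where
  "Bcoef \<beta> \<delta> \<tau> = (2 * \<beta> (Sstar \<beta> \<delta> \<tau>) + Nstar \<beta> \<delta> \<tau> * deriv \<beta> (Sstar \<beta> \<delta> \<tau>))
                   * exp (-\<delta>*\<tau>)"

definition charfun :: "(real \<Rightarrow> real) \<Rightarrow> real \<Rightarrow> complex \<Rightarrow> real \<Rightarrow> complex" where
  "charfun \<beta> \<delta> l \<tau> = l + complex_of_real (Acoef \<beta> \<delta> \<tau>)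
      - complex_of_real (Bcoef \<beta> \<delta> \<tau>) * exp (- l * complex_of_real \<tau>)"

end

theory Submission
  imports Defs
begin

lemma C1_differentiable_on_realI:
  fixes h :: "real \<Rightarrow> real"
  assumes "\<And>y. y \<in> T \<Longrightarrow> (h has_real_derivative h' y) (at y)" "continuous_on T h'"
  shows "h C1_differentiable_on T"
  using assms unfolding C1_differentiable_on_def has_real_derivative_iff_has_vector_derivative
  by blast

text \<open>Chain rule for \<open>C\<^sup>1\<close> functions. Unlike the library's \<open>C1_differentiable_compose\<close>,
  no finiteness of fibres is needed, since the inner function is real-valued.\<close>

lemma C1_differentiable_on_compose_real:
  fixes f :: "real \<Rightarrow> real" and g :: "real \<Rightarrow> 'a::real_normed_vector"
  assumes f: "f C1_differentiable_on S" and g: "g C1_differentiable_on T" and "f ` S \<subseteq> T"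
  shows "(\<lambda>x. g (f x)) C1_differentiable_on S"
proof -
  obtain Df where Df: "\<And>x. x \<in> S \<Longrightarrow> (f has_vector_derivative Df x) (at x)" "continuous_on S Df"
    using f unfolding C1_differentiable_on_def by blast
  obtain Dg where Dg: "\<And>y. y \<in> T \<Longrightarrow> (g has_vector_derivative Dg y) (at y)" "continuous_on T Dg"
    using g unfolding C1_differentiable_on_def by blast
  have "((\<lambda>x. g (f x)) has_vector_derivative Df x *\<^sub>R Dg (f x)) (at x)" if "x \<in> S" for x
  proof -
    have "f x \<in> T" using that assms(3) by blast
    from vector_diff_chain_at[OF Df(1)[OF that] Dg(1)[OF this]] show ?thesis by (simp add: o_def)
  qed
  moreover have "continuous_on S (\<lambda>x. Df x *\<^sub>R Dg (f x))"
    by (rule continuous_on_scaleR[OF Df(2) continuous_on_compose2[OF Dg(2)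
          C1_differentiable_imp_continuous_on[OF f] assms(3)]])
  ultimately show ?thesis
    unfolding C1_differentiable_on_def by (intro exI[of _ "\<lambda>x. Df x *\<^sub>R Dg (f x)"]) blast
qed

lemma C1_differentiable_on_open_cong:
  assumes "open S" "\<And>x. x \<in> S \<Longrightarrow> f x = g x" "f C1_differentiable_on S"
  shows "g C1_differentiable_on S"
proof -
  obtain D where D: "\<And>x. x \<in> S \<Longrightarrow> (f has_vector_derivative D x) (at x)" "continuous_on S D"
    using assms(3) unfolding C1_differentiable_on_def by blast
  have "(g has_vector_derivative D x) (at x)" if "x \<in> S" for x
    using has_vector_derivative_transform_within_open[OF D(1)[OF that] assms(1) that] assms(2) by auto
  with D(2) show ?thesis unfolding C1_differentiable_on_def by blast
qed

lemma exp_C1: "exp C1_differentiable_on S"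
proof (rule C1_differentiable_on_realI)
  show "(exp has_real_derivative exp y) (at y)" for y :: real by (rule DERIV_exp)
qed (rule continuous_on_exp[OF continuous_on_id])

lemma inverse_C1: "(inverse :: real \<Rightarrow> real) C1_differentiable_on {0<..}"
proof (rule C1_differentiable_on_realI)
  show "(inverse has_real_derivative - (inverse y ^ 2)) (at y)" if "y \<in> {0<..}" for y :: real
    using DERIV_inverse[of y] that by (simp add: power2_eq_square)
  show "continuous_on {0<..} (\<lambda>y::real. - (inverse y ^ 2))"
    by (intro continuous_intros) auto
qed

lemma exp_linear_C1: "(\<lambda>\<tau>. exp (c * \<tau>)) C1_differentiable_on S"
  by (rule C1_differentiable_on_compose_real[OF _ exp_C1, of _ _ UNIV]) auto

text \<open>Jacobian of \<open>(z, t) \<mapsto> (f (z, t), t)\<close> when \<open>f\<close> has partial derivatives \<open>a\<close> in the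
  complex variable and \<open>b\<close> in the real parameter.\<close>

definition implicit_jac :: "complex \<Rightarrow> complex \<Rightarrow> complex \<times> real \<Rightarrow> complex \<times> real" where
  "implicit_jac a b v = (a * fst v + of_real (snd v) * b, snd v)"

lemma bounded_linear_implicit_jac: "bounded_linear (implicit_jac a b)"
proof -
  have "bounded_linear (\<lambda>v::complex \<times> real. complex_of_real (snd v))"
    by (rule bounded_linear_compose[OF bounded_linear_of_real bounded_linear_snd])
  then show ?thesis unfolding implicit_jac_def by (auto intro!: bounded_linear_intros)
qed

lemma norm_implicit_jac_diff:
  "norm (Blinfun (implicit_jac a b) - Blinfun (implicit_jac a' b')) \<le> norm (a - a') + norm (b - b')"
proof (rule norm_blinfun_bound)
  show "0 \<le> norm (a - a') + norm (b - b')" by simp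
  fix v :: "complex \<times> real"
  have "norm (blinfun_apply (Blinfun (implicit_jac a b) - Blinfun (implicit_jac a' b')) v)
        = norm ((a - a') * fst v + of_real (snd v) * (b - b'))"
    by (simp add: blinfun.diff_left bounded_linear_Blinfun_apply[OF bounded_linear_implicit_jac]
        implicit_jac_def norm_Pair algebra_simps)
  also have "\<dots> \<le> norm (a - a') * norm (fst v) + norm (snd v) * norm (b - b')"
    by (rule order_trans[OF norm_triangle_ineq]) (simp add: norm_mult)
  also have "\<dots> \<le> norm (a - a') * norm v + norm v * norm (b - b')"
  proof -
    have "norm (fst v) \<le> norm v" "norm (snd v) \<le> norm v"
      by (metis prod.collapse norm_fst_le, metis prod.collapse norm_snd_le)
    then show ?thesis by (intro add_mono mult_mono) auto
  qed
  finally show "norm (blinfun_apply (Blinfun (implicit_jac a b) - Blinfun (implicit_jac a' b')) v)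
      \<le> (norm (a - a') + norm (b - b')) * norm v"
    by (simp add: algebra_simps)
qed

lemma continuous_on_implicit_jac:
  assumes "continuous_on U a" "continuous_on U b"
  shows "continuous_on U (\<lambda>p. Blinfun (implicit_jac (a p) (b p)))"
  unfolding continuous_on_def
proof (intro ballI)
  fix p assume p: "p \<in> U"
  have "((\<lambda>q. a q - a p) \<longlongrightarrow> 0) (at p within U)" "((\<lambda>q. b q - b p) \<longlongrightarrow> 0) (at p within U)"
    using assms p by (auto simp: continuous_on_def LIM_zero_iff)
  then have "((\<lambda>q. norm (a q - a p) + norm (b q - b p)) \<longlongrightarrow> 0) (at p within U)"
    using tendsto_add_zero tendsto_norm_zero by blast
  then have "((\<lambda>q. Blinfun (implicit_jac (a q) (b q)) - Blinfun (implicit_jac (a p) (b p))) \<longlongrightarrow> 0)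
      (at p within U)"
    by (rule Lim_null_comparison[rotated]) (simp add: norm_implicit_jac_diff)
  then show "((\<lambda>q. Blinfun (implicit_jac (a q) (b q))) \<longlongrightarrow> Blinfun (implicit_jac (a p) (b p)))
      (at p within U)"
    by (simp add: LIM_zero_iff)
qed

lemma implicit_curve_derivative:
  fixes f :: "complex \<times> real \<Rightarrow> complex" and lam :: "real \<Rightarrow> complex"
  assumes f: "(f has_derivative (\<lambda>v. a * fst v + of_real (snd v) * b)) (at (lam t, t))"
    and lam: "(lam has_vector_derivative L) (at t)"
    and zero: "e > 0" "\<forall>s\<in>ball t e. f (lam s, s) = 0"
  shows "a * L + b = 0"
proof -
  have curve: "((\<lambda>s. (lam s, s)) has_derivative (\<lambda>h. (h *\<^sub>R L, h))) (at t)"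
    using lam unfolding has_vector_derivative_def
    by (auto intro!: has_derivative_Pair derivative_intros)
  have "((\<lambda>s. f (lam s, s)) has_vector_derivative a * L + b) (at t)"
    using has_derivative_compose[OF curve f] unfolding has_vector_derivative_def
    by (rule has_derivative_eq_rhs) (simp add: fun_eq_iff scaleR_conv_of_real algebra_simps)
  moreover have "((\<lambda>s. f (lam s, s)) has_vector_derivative 0) (at t)"
    by (rule has_vector_derivative_transform_within_open[of "\<lambda>_. 0" 0 t "ball t e"])
       (use zero in auto)
  ultimately show ?thesis by (rule vector_derivative_unique_at)
qed

lemma implicit_jac_inverse:
  assumes "a \<noteq> 0"
  shows "Blinfun (implicit_jac (1 / a) (- b / a)) o\<^sub>L Blinfun (implicit_jac a b) = id_blinfun"
proof (rule blinfun_eqI)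
  fix v :: "complex \<times> real"
  have "implicit_jac (1 / a) (- b / a) (implicit_jac a b v) = v"
    using assms by (simp add: implicit_jac_def field_simps)
  then show "blinfun_apply (Blinfun (implicit_jac (1 / a) (- b / a)) o\<^sub>L Blinfun (implicit_jac a b)) v
      = blinfun_apply id_blinfun v"
    by (simp add: bounded_linear_Blinfun_apply[OF bounded_linear_implicit_jac])
qed

text \<open>Implicit function theorem for one complex equation with a real parameter, obtained from
  the inverse function theorem applied to \<open>(z, t) \<mapsto> (f (z, t), t)\<close>: a differentiable solution curve
  through a root at which the partial derivative in \<open>z\<close> is nonzero.\<close>

lemma implicit_solution_curve:
  fixes f a b :: "complex \<times> real \<Rightarrow> complex"
  assumes U: "open U" "(z0, t0) \<in> U"
    and f': "\<And>p. p \<in> U \<Longrightarrow> (f has_derivative (\<lambda>v. a p * fst v + of_real (snd v) * b p)) (at p)"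
    and cont: "continuous_on U a" "continuous_on U b"
    and root: "f (z0, t0) = 0" and nonsing: "a (z0, t0) \<noteq> 0"
  shows "\<exists>e>0. \<exists>lam. lam t0 = z0 \<and> (\<forall>t\<in>ball t0 e. (lam t, t) \<in> U \<and> f (lam t, t) = 0
            \<and> a (lam t, t) \<noteq> 0 \<and> lam differentiable (at t))"
proof -
  define F where "F = (\<lambda>p. (f p, snd p))"
  define F' where "F' = (\<lambda>p. Blinfun (implicit_jac (a p) (b p)))"
  have F'_apply: "blinfun_apply (F' p) = implicit_jac (a p) (b p)" for p
    unfolding F'_def by (rule bounded_linear_Blinfun_apply[OF bounded_linear_implicit_jac])
  have derF: "(F has_derivative blinfun_apply (F' p)) (at p)" if "p \<in> U" for p
    unfolding F_def F'_apply implicit_jac_def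
    by (auto intro!: has_derivative_Pair derivative_intros f'[OF that])
  have inv0: "Blinfun (implicit_jac (1 / a (z0, t0)) (- b (z0, t0) / a (z0, t0))) o\<^sub>L F' (z0, t0)
      = id_blinfun"
    unfolding F'_def using nonsing by (rule implicit_jac_inverse)
  obtain U' V g g' where "open U'" "U' \<subseteq> U" "(z0, t0) \<in> U'" "open V" "F (z0, t0) \<in> V"
    and hom: "homeomorphism U' V F g"
    and g': "\<And>y. y \<in> V \<Longrightarrow> (g has_derivative g' y) (at y)"
    and "\<And>y. y \<in> V \<Longrightarrow> g' y = inv (blinfun_apply (F' (g y)))"
    and F'_bij: "\<And>y. y \<in> V \<Longrightarrow> bij (blinfun_apply (F' (g y)))"
    using inverse_function_theorem[OF U(1) derF
          continuous_on_implicit_jac[OF cont, folded F'_def] U(2) inv0] by blast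
  have F0: "F (z0, t0) = (0, t0)" using root by (simp add: F_def)
  obtain e where e: "e > 0" "ball (0, t0) e \<subseteq> V"
    using \<open>open V\<close> \<open>F (z0, t0) \<in> V\<close> F0 open_contains_ball by force
  have inV: "(0, t) \<in> V" if "t \<in> ball t0 e" for t
    using e that by (auto simp: dist_Pair_Pair dist_commute)
  define lam where "lam = (\<lambda>t. fst (g (0, t)))"
  have g_eq: "g (0, t) = (lam t, t)" and on_U: "(lam t, t) \<in> U" and zero: "f (lam t, t) = 0"
    if "t \<in> ball t0 e" for t
  proof -
    have "F (g (0, t)) = (0, t)" "g (0, t) \<in> U'"
      using homeomorphism_apply2[OF hom inV[OF that]] homeomorphism_image2[OF hom] inV[OF that]
      by auto
    moreover from this(1) show eq: "g (0, t) = (lam t, t)"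
      by (simp add: F_def lam_def prod_eq_iff)
    ultimately show "(lam t, t) \<in> U" "f (lam t, t) = 0"
      using \<open>U' \<subseteq> U\<close> by (auto simp: F_def)
  qed
  have "lam t0 = z0"
    using homeomorphism_apply1[OF hom \<open>(z0, t0) \<in> U'\<close>] F0 by (simp add: lam_def)
  moreover have "lam differentiable (at t)" if "t \<in> ball t0 e" for t
  proof -
    have "(\<lambda>s. (0::complex, s)) differentiable (at t)"
      by (auto intro!: derivative_intros has_derivative_Pair simp: differentiable_def)
    moreover have "g differentiable (at (0, t))"
      using g'[OF inV[OF that]] by (rule differentiableI)
    ultimately have "(\<lambda>s. g (0, s)) differentiable (at t)"
      using differentiable_chain_at[of "\<lambda>s. (0, s)" t g] by (simp add: o_def)
    then show ?thesis unfolding lam_def differentiable_def by (blast dest: has_derivative_fst)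
  qed
  \<comment> \<open>Along the curve the Jacobian stays invertible, so its first entry cannot vanish.\<close>
  moreover have "a (lam t, t) \<noteq> 0" if "t \<in> ball t0 e" for t
  proof
    assume "a (lam t, t) = 0"
    then have "blinfun_apply (F' (g (0, t))) (1, 0) = blinfun_apply (F' (g (0, t))) (0, 0)"
      by (simp add: g_eq[OF that] F'_apply implicit_jac_def)
    then have "(1::complex, 0::real) = (0, 0)"
      by (rule injD[OF bij_is_inj[OF F'_bij[OF inV[OF that]]]])
    then show False by simp
  qed
  ultimately show ?thesis using e(1) on_U zero by blast
qed

text \<open>The solution curve is \<open>C\<^sup>1\<close>: its derivative \<open>-b/a\<close> is continuous along the curve.\<close>

lemma implicit_function_C1:
  fixes f a b :: "complex \<times> real \<Rightarrow> complex"
  assumes U: "open U" "(z0, t0) \<in> U"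
    and f': "\<And>p. p \<in> U \<Longrightarrow> (f has_derivative (\<lambda>v. a p * fst v + of_real (snd v) * b p)) (at p)"
    and cont: "continuous_on U a" "continuous_on U b"
    and root: "f (z0, t0) = 0" and nonsing: "a (z0, t0) \<noteq> 0"
  shows "\<exists>e>0. \<exists>lam. lam t0 = z0 \<and> lam C1_differentiable_on ball t0 e
            \<and> (\<forall>t\<in>ball t0 e. f (lam t, t) = 0)"
proof -
  obtain e lam where e: "e > 0" and lam0: "lam t0 = z0"
    and lam: "\<And>t. t \<in> ball t0 e \<Longrightarrow> (lam t, t) \<in> U \<and> f (lam t, t) = 0
                    \<and> a (lam t, t) \<noteq> 0 \<and> lam differentiable (at t)"
    using implicit_solution_curve[OF assms] by blast
  define D where "D = (\<lambda>t. - b (lam t, t) / a (lam t, t))"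
  have "(lam has_vector_derivative D t) (at t)" if t: "t \<in> ball t0 e" for t
  proof -
    have L: "(lam has_vector_derivative vector_derivative lam (at t)) (at t)"
      using lam[OF t] by (simp add: vector_derivative_works)
    obtain r where r: "r > 0" "ball t r \<subseteq> ball t0 e"
      using t open_ball[of t0 e] open_contains_ball by blast
    have "a (lam t, t) * vector_derivative lam (at t) + b (lam t, t) = 0"
      by (rule implicit_curve_derivative[OF f' L r(1)]) (use lam t r in auto)
    then have "vector_derivative lam (at t) = D t"
      using lam[OF t] by (simp add: D_def field_simps eq_neg_iff_add_eq_0)
    with L show ?thesis by simp
  qed
  moreover have "continuous_on (ball t0 e) D"
  proof -
    have "continuous_on (ball t0 e) (\<lambda>t. (lam t, t))"
      using lam by (intro continuous_intros continuous_at_imp_continuous_on)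
        (auto intro: differentiable_imp_continuous_within)
    then have "continuous_on (ball t0 e) (\<lambda>t. a (lam t, t))" "continuous_on (ball t0 e) (\<lambda>t. b (lam t, t))"
      using lam by (auto intro!: continuous_on_compose2[OF cont(1)] continuous_on_compose2[OF cont(2)])
    then show ?thesis unfolding D_def using lam by (intro continuous_intros) auto
  qed
  ultimately show ?thesis using e lam0 lam unfolding C1_differentiable_on_def by blast
qed

definition delay_char :: "(real \<Rightarrow> real) \<Rightarrow> (real \<Rightarrow> real) \<Rightarrow> complex \<Rightarrow> real \<Rightarrow> complex" where
  "delay_char A B z t = z + of_real (A t) - of_real (B t) * exp (- z * of_real t)"

definition char_dlam :: "(real \<Rightarrow> real) \<Rightarrow> complex \<Rightarrow> real \<Rightarrow> complex" where
  "char_dlam B z t = 1 + of_real (B t) * of_real t * exp (- z * of_real t)"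

definition char_dtau :: "(real \<Rightarrow> real) \<Rightarrow> real \<Rightarrow> real \<Rightarrow> complex \<Rightarrow> real \<Rightarrow> complex" where
  "char_dtau B A' B' z t = of_real A' - of_real B' * exp (- z * of_real t) + of_real (B t) * z * exp (- z * of_real t)"

lemma delay_char_has_derivative:
  assumes A: "(A has_real_derivative A') (at t)" and B: "(B has_real_derivative B') (at t)"
  shows "((\<lambda>p. delay_char A B (fst p) (snd p)) has_derivative
     (\<lambda>v. char_dlam B z t * fst v + of_real (snd v) * char_dtau B A' B' z t)) (at (z, t))"
proof -
  have coef: "((\<lambda>p. complex_of_real (C (snd p))) has_derivative (\<lambda>v. of_real (C' * snd v))) (at (z, t))"
    if "(C has_real_derivative C') (at t)" for C C'
  proof -
    have "(C has_derivative (*) C') (at (snd (z, t)))"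
      using that by (simp add: has_field_derivative_def)
    from has_derivative_compose[OF has_derivative_snd[OF has_derivative_ident] this]
    have "((\<lambda>p. C (snd p)) has_derivative (\<lambda>v. C' * snd v)) (at (z, t))" by simp
    from has_derivative_of_real[OF this] show ?thesis .
  qed
  have "((\<lambda>p. - fst p * complex_of_real (snd p)) has_derivative
      (\<lambda>v. - z * complex_of_real (snd v) + - fst v * complex_of_real t)) (at (z, t))"
    by (rule derivative_eq_intros refl)+ simp
  from has_derivative_compose[OF this DERIV_exp[unfolded has_field_derivative_def]]
  have "((\<lambda>p. exp (- fst p * of_real (snd p))) has_derivative
      (\<lambda>v. exp (- z * of_real t) * (- z * of_real (snd v) - fst v * of_real t))) (at (z, t))"
    by (simp add: mult.commute)
  from has_derivative_diff[OF has_derivative_add[OF has_derivative_fst[OF has_derivative_ident] coef[OF A]]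
      has_derivative_mult[OF coef[OF B] this]]
  show ?thesis unfolding delay_char_def
    by (rule has_derivative_eq_rhs) (simp add: fun_eq_iff char_dlam_def char_dtau_def algebra_simps)
qed

lemma deriv_delay_char: "deriv (\<lambda>z. delay_char A B z t) z = char_dlam B z t"
proof (rule DERIV_imp_deriv)
  show "((\<lambda>z. delay_char A B z t) has_field_derivative char_dlam B z t) (at z)"
    unfolding delay_char_def char_dlam_def
    by (rule derivative_eq_intros refl)+ (simp add: algebra_simps)
qed

text \<open>Non-real roots are simple: at a root, \<open>\<partial>\<Delta>/\<partial>\<lambda> = 1 + \<tau>(\<lambda> + A)\<close>, whose imaginary part is \<open>\<tau> Im \<lambda>\<close>.\<close>

lemma nonreal_root_simple:
  assumes "delay_char A B z t = 0" "Im z \<noteq> 0" "t \<noteq> 0"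
  shows "char_dlam B z t \<noteq> 0"
proof -
  have "of_real (B t) * exp (- z * of_real t) = z + of_real (A t)"
    using assms(1) by (simp add: delay_char_def)
  then have "char_dlam B z t = 1 + of_real t * (z + of_real (A t))"
    by (simp add: char_dlam_def mult.commute mult.left_commute)
  moreover have "Im (1 + of_real t * (z + of_real (A t))) \<noteq> 0"
    using assms(2,3) by simp
  ultimately show ?thesis by (metis zero_complex.sel(2))
qed

lemma delay_char_root_branch:
  assumes T: "open T" "t0 \<in> T" and C1: "A C1_differentiable_on T" "B C1_differentiable_on T"
    and root: "delay_char A B z0 t0 = 0" and simple: "char_dlam B z0 t0 \<noteq> 0"
  shows "\<exists>e>0. \<exists>lam. lam t0 = z0 \<and> lam C1_differentiable_on ball t0 e
            \<and> (\<forall>t\<in>ball t0 e. delay_char A B (lam t) t = 0)"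
proof -
  obtain A' B' where A': "\<And>t. t \<in> T \<Longrightarrow> (A has_real_derivative A' t) (at t)" "continuous_on T A'"
    and B': "\<And>t. t \<in> T \<Longrightarrow> (B has_real_derivative B' t) (at t)" "continuous_on T B'"
    using C1 unfolding C1_differentiable_on_def has_real_derivative_iff_has_vector_derivative by metis
  have cont: "continuous_on (UNIV \<times> T) (\<lambda>p. f (snd p))" if "continuous_on T f" for f :: "real \<Rightarrow> real"
    by (rule continuous_on_compose2[OF that continuous_on_snd[OF continuous_on_id]]) auto
  have "continuous_on T B" using C1(2) by (rule C1_differentiable_imp_continuous_on)
  note cont_coef = cont[OF this] cont[OF A'(2)] cont[OF B'(2)]
  have "\<exists>e>0. \<exists>lam. lam t0 = z0 \<and> lam C1_differentiable_on ball t0 e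
          \<and> (\<forall>t\<in>ball t0 e. delay_char A B (fst (lam t, t)) (snd (lam t, t)) = 0)"
  proof (rule implicit_function_C1[where U = "UNIV \<times> T"])
    show "((\<lambda>p. delay_char A B (fst p) (snd p)) has_derivative
        (\<lambda>v. char_dlam B (fst p) (snd p) * fst v + of_real (snd v) * char_dtau B (A' (snd p)) (B' (snd p)) (fst p) (snd p)))
        (at p)" if "p \<in> UNIV \<times> T" for p
      using delay_char_has_derivative[OF A'(1) B'(1), of "snd p" "fst p"] that by auto
    show "continuous_on (UNIV \<times> T) (\<lambda>p. char_dlam B (fst p) (snd p))"
      unfolding char_dlam_def by (intro continuous_intros cont_coef)
    show "continuous_on (UNIV \<times> T) (\<lambda>p. char_dtau B (A' (snd p)) (B' (snd p)) (fst p) (snd p))"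
      unfolding char_dtau_def by (intro continuous_intros cont_coef)
  qed (use T root simple in \<open>auto simp: open_Times\<close>)
  then show ?thesis by simp
qed

lemma exp_imaginary_times:
  "exp (- (\<i> * complex_of_real w) * complex_of_real t) = Complex (cos (w * t)) (- sin (w * t))"
proof -
  have "exp (- (\<i> * complex_of_real w) * complex_of_real t) = cis (- (w * t))"
    by (simp add: cis_conv_exp mult.commute mult.left_commute)
  then show ?thesis by (simp add: complex_eq_iff)
qed

lemma imaginary_root_relations:
  assumes "delay_char A B (\<i> * of_real w) t = 0"
  shows "A t = B t * cos (w * t)" "w = - B t * sin (w * t)" "w\<^sup>2 = (B t)\<^sup>2 - (A t)\<^sup>2"
proof -
  show cos: "A t = B t * cos (w * t)" and sin: "w = - B t * sin (w * t)"
    using assms unfolding delay_char_def exp_imaginary_times by (simp_all add: complex_eq_iff)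
  have "w\<^sup>2 + (A t)\<^sup>2 = (B t * sin (w * t))\<^sup>2 + (B t * cos (w * t))\<^sup>2"
    by (subst (1) sin, subst cos) simp
  also have "\<dots> = (B t)\<^sup>2 * ((sin (w * t))\<^sup>2 + (cos (w * t))\<^sup>2)"
    by (simp only: power_mult_distrib distrib_left)
  finally show "w\<^sup>2 = (B t)\<^sup>2 - (A t)\<^sup>2" by simp
qed

text \<open>If \<open>L\<close> solves the implicit-differentiation
  equation at a root \<open>i\<omega>\<close> with \<open>0 < A\<close> and \<open>B < A\<close>, then \<open>B < 0\<close>, and solving the \<open>2\<times>2\<close> real
  system gives \<open>-B |\<partial>\<Delta>/\<partial>\<lambda>|\<^sup>2 Re L\<close> equal to the polynomial expression below.\<close>

lemma crossing_direction:
  fixes A B :: "real \<Rightarrow> real" and A' B' t w :: real and L :: complex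
  assumes t: "t > 0" and w: "w > 0" and A_pos: "A t > 0" and B_lt_A: "B t < A t"
    and root: "delay_char A B (\<i> * of_real w) t = 0"
    and implicit: "char_dlam B (\<i> * of_real w) t * L + char_dtau B A' B' (\<i> * of_real w) t = 0"
  shows "sgn (Re L) = sgn (- (B t ^ 3) - (B t)\<^sup>2 * B' * t + B t * ((A t)\<^sup>2 + A' + A t * A' * t) - B' * A t)"
proof -
  define a where "a = A t"
  define b where "b = B t"
  define c where "c = cos (w * t)"
  define s where "s = sin (w * t)"
  define x where "x = Re L"
  define y where "y = Im L"
  have cos: "b * c = a" and sin: "b * s = - w" and w2: "w\<^sup>2 = b\<^sup>2 - a\<^sup>2"
    using imaginary_root_relations[OF root] by (simp_all add: a_def b_def c_def s_def)
  have b_neg: "b < 0"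
  proof (rule ccontr)
    assume "\<not> b < 0"
    then have "b * b < a * a" using B_lt_A by (intro mult_strict_mono) (auto simp: a_def b_def)
    with w2 have "w\<^sup>2 < 0" by (simp add: power2_eq_square)
    with w show False by simp
  qed
  have L: "L = Complex x y" by (simp add: x_def y_def)
  have E: "exp (- (\<i> * complex_of_real w) * complex_of_real t) = Complex c (- s)"
    unfolding c_def s_def by (rule exp_imaginary_times)
  from implicit have re: "x * (1 + b * t * c) + y * (b * t * s) + (A' - B' * c + b * w * s) = 0"
    and im: "x * (- (b * t * s)) + y * (1 + b * t * c) + (B' * s + b * w * c) = 0"
    unfolding L char_dlam_def char_dtau_def E b_def[symmetric]
    by (simp_all add: complex_eq_iff algebra_simps)
  have subst: "b * t * c = t * a" "b * t * s = - (t * w)" "b * w * s = - w\<^sup>2" "b * w * c = w * a"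
  proof -
    have "b * t * c = t * (b * c)" "b * t * s = t * (b * s)" "b * w * s = w * (b * s)"
      "b * w * c = w * (b * c)"
      by (simp_all add: algebra_simps)
    then show "b * t * c = t * a" "b * t * s = - (t * w)" "b * w * s = - w\<^sup>2" "b * w * c = w * a"
      unfolding cos sin by (simp_all add: power2_eq_square)
  qed
  have re': "x * (1 + t * a) - y * t * w + (A' - B' * c - w\<^sup>2) = 0"
    using re unfolding subst by (simp add: algebra_simps)
  have im': "x * t * w + y * (1 + t * a) + (B' * s + w * a) = 0"
    using im unfolding subst by (simp add: algebra_simps)
  define D where "D = (1 + t * a)\<^sup>2 + (t * w)\<^sup>2"
  have "1 + t * a > 0" using t A_pos by (simp add: a_def add_pos_pos)
  then have D_pos: "D > 0" unfolding D_def by (simp add: add_pos_nonneg)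
  have xD: "x * D = - ((1 + t * a) * (A' - B' * c - w\<^sup>2) + t * w * (B' * s + w * a))"
  proof -
    have "(1 + t * a) * (x * (1 + t * a) - y * t * w + (A' - B' * c - w\<^sup>2))
        + t * w * (x * t * w + y * (1 + t * a) + (B' * s + w * a)) = 0"
      using re' im' by simp
    then show ?thesis unfolding D_def by (simp add: algebra_simps power2_eq_square)
  qed
  have "x * D * (- b) = (1 + t * a) * (b * A' - B' * (b * c) - b * w\<^sup>2) + t * w * (B' * (b * s) + w * a * b)"
    unfolding xD by (simp add: algebra_simps)
  also have "\<dots> = (1 + t * a) * (b * A' - B' * a - b * w\<^sup>2) + t * (- B' * w\<^sup>2 + w\<^sup>2 * a * b)"
    unfolding cos sin by (simp add: algebra_simps power2_eq_square)
  also have "\<dots> = - (b ^ 3) - b\<^sup>2 * B' * t + b * (a\<^sup>2 + A' + a * A' * t) - B' * a"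
    unfolding w2 by (simp add: algebra_simps power2_eq_square power3_eq_cube)
  finally have "x * D * (- b) = - (b ^ 3) - b\<^sup>2 * B' * t + b * (a\<^sup>2 + A' + a * A' * t) - B' * a" .
  moreover have "sgn (x * D * (- b)) = sgn x" using D_pos b_neg by (simp add: sgn_mult)
  ultimately show ?thesis by (simp add: x_def a_def b_def)
qed

text \<open>\<open>level \<delta> \<tau> = \<beta>(S*(\<tau>))\<close>: the value of \<open>\<beta>\<close> at the steady state.\<close>

definition level :: "real \<Rightarrow> real \<Rightarrow> real" where
  "level \<delta> \<tau> = \<delta> / (2 * exp (- \<delta> * \<tau>) - 1)"

lemma Sstar_level: "Sstar \<beta> \<delta> \<tau> = beta_inv \<beta> (level \<delta> \<tau>)"
  by (simp add: Sstar_def level_def)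

lemma charfun_eq: "charfun \<beta> \<delta> = delay_char (Acoef \<beta> \<delta>) (Bcoef \<beta> \<delta>)"
  by (simp add: fun_eq_iff charfun_def delay_char_def)

lemma at_within_nonneg: "s > 0 \<Longrightarrow> at s within {0::real..} = at s"
proof (rule at_within_interior)
  assume "s > 0"
  have "{0<..} \<subseteq> interior {0::real..}" by (rule interior_maximal) auto
  then show "s \<in> interior {0..}" using \<open>s > 0\<close> by auto
qed

locale delay_model =
  fixes \<beta> d\<beta> dd\<beta> :: "real \<Rightarrow> real" and \<delta> :: real
  assumes delta_pos: "\<delta> > 0"
    and beta_d1: "\<forall>s\<ge>0. (\<beta> has_real_derivative d\<beta> s) (at s within {0..})"
    and beta_d2: "\<forall>s\<ge>0. (d\<beta> has_real_derivative dd\<beta> s) (at s within {0..})"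
    and beta_d2_cont: "continuous_on {0..} dd\<beta>"
    and beta_strict_dec: "\<forall>x y. 0 \<le> x \<longrightarrow> x < y \<longrightarrow> \<beta> y < \<beta> x"
    and beta_d1_neg: "\<forall>s>0. d\<beta> s < 0"
    and beta_lim: "(\<beta> \<longlongrightarrow> 0) at_top"
    and delta_lt: "\<delta> < \<beta> 0"
begin

lemma beta_deriv_at: "s > 0 \<Longrightarrow> (\<beta> has_real_derivative d\<beta> s) (at s)"
  by (metis at_within_nonneg beta_d1 less_imp_le)

lemma dbeta_deriv_at: "s > 0 \<Longrightarrow> (d\<beta> has_real_derivative dd\<beta> s) (at s)"
  by (metis at_within_nonneg beta_d2 less_imp_le)

lemma beta_inj: "inj_on \<beta> {0..}"
  by (rule inj_onI) (metis atLeast_iff beta_strict_dec less_irrefl linorder_neqE_linordered_idom)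

lemma beta_inv_beta: "s \<ge> 0 \<Longrightarrow> beta_inv \<beta> (\<beta> s) = s"
  unfolding beta_inv_def using beta_inj by (intro the_inv_into_f_f) auto

lemma beta_inv_solves:
  assumes "0 < v" "v < \<beta> 0"
  shows "0 < beta_inv \<beta> v \<and> \<beta> (beta_inv \<beta> v) = v"
proof -
  have cont: "continuous_on {0..} \<beta>"
    using beta_d1 by (auto simp: continuous_on_eq_continuous_within intro: DERIV_continuous)
  obtain M where M: "\<And>x. x \<ge> M \<Longrightarrow> \<beta> x < v"
    using order_tendstoD(2)[OF beta_lim assms(1)] by (auto simp: eventually_at_top_linorder)
  \<comment> \<open>Intermediate value theorem between \<open>0\<close> and a point where \<open>\<beta>\<close> has dropped below \<open>v\<close>.\<close>
  have "\<exists>s. 0 \<le> s \<and> s \<le> max M 1 \<and> \<beta> s = v"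
    by (rule IVT2') (use M assms cont in \<open>auto intro: less_imp_le continuous_on_subset\<close>)
  then obtain s where s: "0 \<le> s" "\<beta> s = v" by auto
  with assms have "s > 0" by (cases "s = 0") auto
  with s show ?thesis using beta_inv_beta by auto
qed

lemma beta_inv_deriv:
  assumes v: "v \<in> {0<..<\<beta> 0}"
  shows "(beta_inv \<beta> has_real_derivative inverse (d\<beta> (beta_inv \<beta> v))) (at v)"
proof -
  define s where "s = beta_inv \<beta> v"
  have s: "s > 0" "\<beta> s = v" using beta_inv_solves v by (auto simp: s_def)
  have "isCont (beta_inv \<beta>) (\<beta> s)"
  proof (rule isCont_inverse_function2[of "s / 2" s "s + 1"])
    show "beta_inv \<beta> (\<beta> z) = z" if "s / 2 \<le> z" "z \<le> s + 1" for z
      using that s beta_inv_beta by auto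
    show "isCont \<beta> z" if "s / 2 \<le> z" "z \<le> s + 1" for z
      using that s beta_deriv_at[of z] by (auto intro: DERIV_isCont)
  qed (use s in auto)
  then have cont: "isCont (beta_inv \<beta>) v" using s(2) by simp
  have deriv: "(\<beta> has_real_derivative d\<beta> s) (at (beta_inv \<beta> v))"
    using beta_deriv_at[OF s(1)] by (simp add: s_def)
  have nonzero: "d\<beta> s \<noteq> 0" using beta_d1_neg s(1) by fastforce
  have inverse: "\<beta> (beta_inv \<beta> u) = u" if "0 < u" "u < \<beta> 0" for u
    using beta_inv_solves[OF that] by blast
  from v have "0 < v" "v < \<beta> 0" by auto
  from DERIV_inverse_function[OF deriv nonzero this inverse cont] show ?thesis
    by (simp add: s_def)
qed

lemma beta_inv_C1: "beta_inv \<beta> C1_differentiable_on {0<..<\<beta> 0}"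
proof (rule C1_differentiable_on_realI[OF beta_inv_deriv])
  have "continuous_on {0<..} d\<beta>"
    using dbeta_deriv_at by (meson DERIV_isCont continuous_at_imp_continuous_on greaterThan_iff)
  moreover have "continuous_on {0<..<\<beta> 0} (beta_inv \<beta>)"
    using beta_inv_deriv by (meson DERIV_isCont continuous_at_imp_continuous_on)
  moreover have pos: "beta_inv \<beta> ` {0<..<\<beta> 0} \<subseteq> {0<..}"
    using beta_inv_solves by (simp add: image_subset_iff)
  ultimately have "continuous_on {0<..<\<beta> 0} (\<lambda>v. d\<beta> (beta_inv \<beta> v))"
    by (rule continuous_on_compose2)
  moreover have "\<forall>v\<in>{0<..<\<beta> 0}. d\<beta> (beta_inv \<beta> v) \<noteq> 0"
    using pos beta_d1_neg by (metis image_subset_iff greaterThan_iff less_irrefl)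
  ultimately show "continuous_on {0<..<\<beta> 0} (\<lambda>v. inverse (d\<beta> (beta_inv \<beta> v)))"
    by (rule continuous_on_inverse)
qed

lemma beta_C1: "\<beta> C1_differentiable_on {0<..}" and deriv_beta_C1: "deriv \<beta> C1_differentiable_on {0<..}"
proof -
  have "continuous_on {0<..} dd\<beta>"
    using beta_d2_cont by (rule continuous_on_subset) auto
  then have dbeta: "d\<beta> C1_differentiable_on {0<..}"
    by (intro C1_differentiable_on_realI[where h' = dd\<beta>]) (simp_all add: dbeta_deriv_at)
  show "\<beta> C1_differentiable_on {0<..}"
    using C1_differentiable_imp_continuous_on[OF dbeta]
    by (intro C1_differentiable_on_realI[where h' = d\<beta>]) (simp_all add: beta_deriv_at)
  show "deriv \<beta> C1_differentiable_on {0<..}"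
    by (rule C1_differentiable_on_open_cong[OF _ _ dbeta])
       (simp_all add: DERIV_imp_deriv[OF beta_deriv_at])
qed

abbreviation delays :: "real set" where
  "delays \<equiv> {0<..<taubar \<beta> \<delta>}"

text \<open>For admissible delays \<open>q = 2e\<^sup>-\<^sup>\<delta>\<^sup>\<tau> - 1 \<in> (\<delta>/\<beta>(0), 1)\<close>, so \<open>\<beta>(S*) = \<delta>/q \<in> (\<delta>, \<beta>(0))\<close>.\<close>

lemma level_bounds:
  assumes "\<tau> \<in> delays"
  shows "0 < 2 * exp (- \<delta> * \<tau>) - 1" "\<delta> < level \<delta> \<tau>" "level \<delta> \<tau> < \<beta> 0"
proof -
  define q where "q = 2 * exp (- \<delta> * \<tau>) - 1"
  have beta0: "\<beta> 0 > 0" using delta_pos delta_lt by linarith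
  have "\<delta> * \<tau> < ln (2 * \<beta> 0 / (\<delta> + \<beta> 0))"
    using assms delta_pos by (simp add: taubar_def field_simps)
  then have "exp (\<delta> * \<tau>) < 2 * \<beta> 0 / (\<delta> + \<beta> 0)"
    using beta0 delta_pos by (metis exp_less_cancel_iff exp_ln add_pos_pos divide_pos_pos mult_pos_pos zero_less_numeral)
  then have "(\<delta> + \<beta> 0) * exp (\<delta> * \<tau>) < 2 * \<beta> 0"
    using beta0 delta_pos by (simp add: field_simps)
  then have "(\<delta> + \<beta> 0) * exp (\<delta> * \<tau>) * exp (- \<delta> * \<tau>) < 2 * \<beta> 0 * exp (- \<delta> * \<tau>)"
    by (rule mult_strict_right_mono) simp
  then have q_big: "\<delta> < q * \<beta> 0"
    by (simp add: q_def algebra_simps flip: exp_add)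
  have q_small: "q < 1" using assms delta_pos by (simp add: q_def)
  have q_pos: "0 < q" using q_big beta0 delta_pos by (metis mult_pos_pos less_trans not_less zero_less_mult_pos2)
  show "0 < 2 * exp (- \<delta> * \<tau>) - 1" using q_pos by (simp add: q_def)
  have level: "level \<delta> \<tau> = \<delta> / q" by (simp add: level_def q_def)
  show "\<delta> < level \<delta> \<tau>" using q_pos q_small delta_pos by (simp add: level less_divide_eq)
  show "level \<delta> \<tau> < \<beta> 0" using q_pos q_big by (simp add: level divide_less_eq mult.commute)
qed

lemma Sstar_solves:
  assumes "\<tau> \<in> delays"
  shows "0 < Sstar \<beta> \<delta> \<tau>" "\<beta> (Sstar \<beta> \<delta> \<tau>) = level \<delta> \<tau>"
  using beta_inv_solves level_bounds[OF assms] delta_pos by (simp_all add: Sstar_level)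

lemma level_C1: "level \<delta> C1_differentiable_on delays"
proof -
  have "(\<lambda>\<tau>. 2 * exp (- \<delta> * \<tau>) - 1) C1_differentiable_on delays"
    by (intro C1_differentiable_on_diff C1_differentiable_on_mult C1_differentiable_on_const exp_linear_C1)
  moreover have "(\<lambda>\<tau>. 2 * exp (- \<delta> * \<tau>) - 1) ` delays \<subseteq> {0<..}"
    using level_bounds(1) by auto
  ultimately have "(\<lambda>\<tau>. inverse (2 * exp (- \<delta> * \<tau>) - 1)) C1_differentiable_on delays"
    by (rule C1_differentiable_on_compose_real[OF _ inverse_C1])
  then have "(\<lambda>\<tau>. \<delta> * inverse (2 * exp (- \<delta> * \<tau>) - 1)) C1_differentiable_on delays"
    by simp
  then show ?thesis by (simp add: level_def[abs_def] divide_inverse)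
qed

lemma Sstar_C1: "Sstar \<beta> \<delta> C1_differentiable_on delays"
  unfolding Sstar_level[abs_def]
  using level_bounds(2,3) delta_pos
  by (intro C1_differentiable_on_compose_real[OF level_C1 beta_inv_C1]) fastforce

lemma coefficients_C1: "Acoef \<beta> \<delta> C1_differentiable_on delays" "Bcoef \<beta> \<delta> C1_differentiable_on delays"
proof -
  have S_pos: "Sstar \<beta> \<delta> ` delays \<subseteq> {0<..}" using Sstar_solves(1) by auto
  have beta_S: "(\<lambda>\<tau>. \<beta> (Sstar \<beta> \<delta> \<tau>)) C1_differentiable_on delays"
    by (rule C1_differentiable_on_compose_real[OF Sstar_C1 beta_C1 S_pos])
  have dbeta_S: "(\<lambda>\<tau>. deriv \<beta> (Sstar \<beta> \<delta> \<tau>)) C1_differentiable_on delays"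
    by (rule C1_differentiable_on_compose_real[OF Sstar_C1 deriv_beta_C1 S_pos])
  show "Acoef \<beta> \<delta> C1_differentiable_on delays"
    unfolding Acoef_def[abs_def] using beta_S by simp
  show "Bcoef \<beta> \<delta> C1_differentiable_on delays"
    unfolding Bcoef_def[abs_def] Nstar_def
    by (intro C1_differentiable_on_mult C1_differentiable_on_add beta_S dbeta_S Sstar_C1
        C1_differentiable_on_diff exp_linear_C1 C1_differentiable_on_const)
qed

text \<open>\<open>B = A + q S* \<beta>'(S*)\<close>, so \<open>0 < A\<close> and \<open>B < A\<close> for admissible delays.\<close>

lemma coefficient_bounds:
  assumes "\<tau> \<in> delays"
  shows "0 < Acoef \<beta> \<delta> \<tau>" "Bcoef \<beta> \<delta> \<tau> < Acoef \<beta> \<delta> \<tau>"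
proof -
  define S where "S = Sstar \<beta> \<delta> \<tau>"
  define q where "q = 2 * exp (- \<delta> * \<tau>) - 1"
  have q_pos: "q > 0" using level_bounds(1)[OF assms] by (simp add: q_def)
  have S_pos: "S > 0" and beta_S: "\<beta> S = \<delta> / q"
    using Sstar_solves[OF assms] by (simp_all add: S_def q_def level_def)
  have "deriv \<beta> S = d\<beta> S" using beta_deriv_at[OF S_pos] by (rule DERIV_imp_deriv)
  then have slope: "q * S * deriv \<beta> S < 0"
    using q_pos S_pos beta_d1_neg by (simp add: mult_pos_neg)
  have A: "Acoef \<beta> \<delta> \<tau> = \<delta> + \<delta> / q" unfolding Acoef_def S_def[symmetric] beta_S ..
  \<comment> \<open>Since \<open>2 e\<^sup>-\<^sup>\<delta>\<^sup>\<tau> = q + 1\<close>, the first term of \<open>B\<close> is exactly \<open>A\<close>.\<close>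
  have N: "Nstar \<beta> \<delta> \<tau> = q * exp (\<delta> * \<tau>) * S" by (simp add: Nstar_def q_def S_def)
  have "Bcoef \<beta> \<delta> \<tau> = 2 * (\<delta> / q) * exp (- \<delta> * \<tau>) + q * S * deriv \<beta> S * (exp (\<delta> * \<tau>) * exp (- \<delta> * \<tau>))"
    unfolding Bcoef_def S_def[symmetric] N beta_S by (simp add: algebra_simps)
  also have "\<dots> = \<delta> * (q + 1) / q + q * S * deriv \<beta> S"
    by (simp add: q_def flip: exp_add)
  also have "\<delta> * (q + 1) / q = Acoef \<beta> \<delta> \<tau>" using q_pos by (simp add: A field_simps)
  finally show "Bcoef \<beta> \<delta> \<tau> < Acoef \<beta> \<delta> \<tau>" using slope by simp
  show "0 < Acoef \<beta> \<delta> \<tau>" using A q_pos delta_pos by (simp add: add_pos_pos)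
qed

lemma imaginary_root_simple:
  assumes "\<tau> \<in> delays" "charfun \<beta> \<delta> z \<tau> = 0" "Im z \<noteq> 0"
  shows "deriv (\<lambda>l. charfun \<beta> \<delta> l \<tau>) z \<noteq> 0"
  using nonreal_root_simple assms by (simp add: charfun_eq deriv_delay_char)

lemma imaginary_root_branch:
  assumes "\<tau>c \<in> delays" "charfun \<beta> \<delta> z0 \<tau>c = 0" "Im z0 \<noteq> 0"
  shows "\<exists>\<epsilon>>0. \<exists>lam. lam \<tau>c = z0 \<and> lam C1_differentiable_on ball \<tau>c \<epsilon>
           \<and> (\<forall>\<tau>\<in>ball \<tau>c \<epsilon>. charfun \<beta> \<delta> (lam \<tau>) \<tau> = 0)"
  using delay_char_root_branch[OF open_greaterThanLessThan assms(1) coefficients_C1]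
    nonreal_root_simple assms by (simp add: charfun_eq)

lemma crossing_sign:
  assumes tau: "\<tau>c \<in> delays" and w: "w > 0" and root: "charfun \<beta> \<delta> (\<i> * of_real w) \<tau>c = 0"
    and lam: "\<epsilon> > 0" "lam \<tau>c = \<i> * of_real w" "lam differentiable (at \<tau>c)"
      "\<forall>\<tau>\<in>ball \<tau>c \<epsilon>. charfun \<beta> \<delta> (lam \<tau>) \<tau> = 0"
  shows "sgn (Re (vector_derivative lam (at \<tau>c)))
      = sgn (- ((Bcoef \<beta> \<delta> \<tau>c) ^ 3) - (Bcoef \<beta> \<delta> \<tau>c) ^ 2 * deriv (Bcoef \<beta> \<delta>) \<tau>c * \<tau>c
             + Bcoef \<beta> \<delta> \<tau>c * ((Acoef \<beta> \<delta> \<tau>c) ^ 2 + deriv (Acoef \<beta> \<delta>) \<tau>c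
                 + Acoef \<beta> \<delta> \<tau>c * deriv (Acoef \<beta> \<delta>) \<tau>c * \<tau>c)
             - deriv (Bcoef \<beta> \<delta>) \<tau>c * Acoef \<beta> \<delta> \<tau>c)"
proof (rule crossing_direction)
  have "(Acoef \<beta> \<delta> has_real_derivative deriv (Acoef \<beta> \<delta>) \<tau>c) (at \<tau>c)"
    "(Bcoef \<beta> \<delta> has_real_derivative deriv (Bcoef \<beta> \<delta>) \<tau>c) (at \<tau>c)"
    using coefficients_C1 tau by (simp_all add: C1_differentiable_on_eq DERIV_deriv_iff_real_differentiable)
  from delay_char_has_derivative[OF this]
  have "((\<lambda>p. delay_char (Acoef \<beta> \<delta>) (Bcoef \<beta> \<delta>) (fst p) (snd p)) has_derivative
      (\<lambda>v. char_dlam (Bcoef \<beta> \<delta>) (lam \<tau>c) \<tau>c * fst v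
        + of_real (snd v) * char_dtau (Bcoef \<beta> \<delta>) (deriv (Acoef \<beta> \<delta>) \<tau>c) (deriv (Bcoef \<beta> \<delta>) \<tau>c) (lam \<tau>c) \<tau>c))
      (at (lam \<tau>c, \<tau>c))" .
  moreover have "(lam has_vector_derivative vector_derivative lam (at \<tau>c)) (at \<tau>c)"
    using lam(3) by (simp add: vector_derivative_works)
  ultimately have "char_dlam (Bcoef \<beta> \<delta>) (lam \<tau>c) \<tau>c * vector_derivative lam (at \<tau>c)
      + char_dtau (Bcoef \<beta> \<delta>) (deriv (Acoef \<beta> \<delta>) \<tau>c) (deriv (Bcoef \<beta> \<delta>) \<tau>c) (lam \<tau>c) \<tau>c = 0"
    by (rule implicit_curve_derivative[OF _ _ lam(1)]) (use lam(4) in \<open>simp add: charfun_eq\<close>)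
  then show "char_dlam (Bcoef \<beta> \<delta>) (\<i> * of_real w) \<tau>c * vector_derivative lam (at \<tau>c)
      + char_dtau (Bcoef \<beta> \<delta>) (deriv (Acoef \<beta> \<delta>) \<tau>c) (deriv (Bcoef \<beta> \<delta>) \<tau>c) (\<i> * of_real w) \<tau>c = 0"
    by (simp only: lam(2))
qed (use tau w root coefficient_bounds[OF tau] in \<open>simp_all add: charfun_eq\<close>)

end

theorem proposition5p1:
  fixes \<beta> d\<beta> dd\<beta> :: "real \<Rightarrow> real" and \<delta> \<tau>c \<omega> :: real
  assumes delta_pos: "\<delta> > 0"
    and beta_pos: "\<forall>s\<ge>0. \<beta> s > 0"
    and beta_d1: "\<forall>s\<ge>0. (\<beta> has_real_derivative d\<beta> s) (at s within {0..})"
    and beta_d2: "\<forall>s\<ge>0. (d\<beta> has_real_derivative dd\<beta> s) (at s within {0..})"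
    and beta_d2_cont: "continuous_on {0..} dd\<beta>"
    and beta_strict_dec: "\<forall>x y. 0 \<le> x \<longrightarrow> x < y \<longrightarrow> \<beta> y < \<beta> x"
    and beta_d1_neg: "\<forall>s>0. d\<beta> s < 0"
    and beta_lim: "(\<beta> \<longlongrightarrow> 0) at_top"
    and delta_lt: "\<delta> < \<beta> 0"
    and tau_c: "0 < \<tau>c" "\<tau>c < taubar \<beta> \<delta>"
    and omega_pos: "\<omega> > 0"
    and root_pos: "charfun \<beta> \<delta> (\<i> * complex_of_real \<omega>) \<tau>c = 0"
    and root_neg: "charfun \<beta> \<delta> (- \<i> * complex_of_real \<omega>) \<tau>c = 0"
  shows
    "deriv (\<lambda>l. charfun \<beta> \<delta> l \<tau>c) (\<i> * complex_of_real \<omega>) \<noteq> 0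
     \<and> deriv (\<lambda>l. charfun \<beta> \<delta> l \<tau>c) (- \<i> * complex_of_real \<omega>) \<noteq> 0
     \<and> (\<exists>\<epsilon>>0. \<exists>lam :: real \<Rightarrow> complex.
          lam \<tau>c = \<i> * complex_of_real \<omega>
          \<and> lam C1_differentiable_on ball \<tau>c \<epsilon>
          \<and> (\<forall>\<tau>\<in>ball \<tau>c \<epsilon>. charfun \<beta> \<delta> (lam \<tau>) \<tau> = 0))
     \<and> (\<forall>\<epsilon> (lam :: real \<Rightarrow> complex). \<epsilon> > 0
          \<longrightarrow> lam \<tau>c = \<i> * complex_of_real \<omega>
          \<longrightarrow> lam differentiable (at \<tau>c)
          \<longrightarrow> (\<forall>\<tau>\<in>ball \<tau>c \<epsilon>. charfun \<beta> \<delta> (lam \<tau>) \<tau> = 0)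
          \<longrightarrow> sgn (Re (vector_derivative lam (at \<tau>c)))
              = sgn (- ((Bcoef \<beta> \<delta> \<tau>c) ^ 3)
                     - (Bcoef \<beta> \<delta> \<tau>c) ^ 2 * deriv (Bcoef \<beta> \<delta>) \<tau>c * \<tau>c
                     + Bcoef \<beta> \<delta> \<tau>c * ((Acoef \<beta> \<delta> \<tau>c) ^ 2 + deriv (Acoef \<beta> \<delta>) \<tau>c
                          + Acoef \<beta> \<delta> \<tau>c * deriv (Acoef \<beta> \<delta>) \<tau>c * \<tau>c)
                     - deriv (Bcoef \<beta> \<delta>) \<tau>c * Acoef \<beta> \<delta> \<tau>c))"
proof -
  interpret delay_model \<beta> d\<beta> dd\<beta> \<delta>
    using delta_pos beta_d1 beta_d2 beta_d2_cont beta_strict_dec beta_d1_neg beta_lim delta_lt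
    by unfold_locales
  have tau: "\<tau>c \<in> delays" using tau_c by simp
  show ?thesis
    using imaginary_root_simple[OF tau root_pos] imaginary_root_simple[OF tau root_neg]
      imaginary_root_branch[OF tau root_pos] crossing_sign[OF tau omega_pos root_pos] omega_pos
    by auto
qed

end
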